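(* Let $G=(V,E)$ be a transport graph with $n$ nodes and $m$ edges, incidence matrix $A\in\mathbb{R}^{m\times n}$, and positive node weights $g\in\mathbb{R}^n$. Let $F\in\mathbb{R}^m$ be a flow satisfying the capacity constraint $\sqrt{|A^T|F^2}\le g$, and let $u\in\mathbb{R}^n$. Then $$F^TAu\le g^T\sqrt{|A^T|(Au)^2}.$$
   Context: A transport graph is a graph with a distinguished source node $s$ and sink node $t$ together with edges linking some nodes to the source and some to the sink; $n$ and $m$ include these nodes and edges. Each edge $e_{ij}$ is oriented from $v_i$ to $v_j$; a flow is a vector $F\in\mathbb{R}^m$ indexed by edges. The incidence matrix $A$ has $A_{e_{ij},v_k}=+1$ if $k=i$, $-1$ if $k=j$, $0$ otherwise, so $(Au)_{e_{ij}}=u_i-u_j$; $|A|$ is the entrywise absolute value of $A$. For vectors, $v^2$ is the entrywise square, $\sqrt{v}$ the entrywise square root, and inequalities are entrywise. *)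

theory Defs
  imports "HOL-Analysis.Analysis"
begin

definition incidence :: "('e \<Rightarrow> 'v) \<Rightarrow> ('e \<Rightarrow> 'v) \<Rightarrow> real ^ 'v ^ 'e" where
  "incidence src dst = (\<chi> e k. if k = src e then 1 else if k = dst e then -1 else 0)"

definition mat_abs :: "real ^ 'n ^ 'm \<Rightarrow> real ^ 'n ^ 'm" where
  "mat_abs M = (\<chi> i j. \<bar>M $ i $ j\<bar>)"

definition vec_sq :: "real ^ 'n \<Rightarrow> real ^ 'n" where
  "vec_sq v = (\<chi> i. (v $ i) ^ 2)"

definition vec_sqrt :: "real ^ 'n \<Rightarrow> real ^ 'n" where
  "vec_sqrt v = (\<chi> i. sqrt (v $ i))"

end

theory Submission
  imports Defs
begin

text \<open>Each edge is incident to at least one node, so summing \<open>\<bar>F\<^sub>e\<bar> \<bar>(Au)\<^sub>e\<bar>\<close> over the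
  edges is dominated by summing it over the edges incident to each node, node by node.
  By Cauchy-Schwarz the contribution of node \<open>k\<close> is at most the product of the \<open>\<ell>\<^sup>2\<close>-norms
  of \<open>F\<close> and \<open>Au\<close> over the edges at \<open>k\<close>, which are exactly the \<open>k\<close>-th entries of
  \<open>\<surd>(|A\<^sup>T| F\<^sup>2)\<close> and \<open>\<surd>(|A\<^sup>T| (Au)\<^sup>2)\<close>; the capacity constraint bounds the first by \<open>g\<^sub>k\<close>.\<close>

lemma sum_le_sum_over_cover:
  fixes x :: "'i \<Rightarrow> 'a::ordered_comm_monoid_add"
  assumes "finite I" "finite K"
    and "\<And>i. i \<in> I \<Longrightarrow> 0 \<le> x i"
    and "\<And>i. i \<in> I \<Longrightarrow> \<exists>k\<in>K. R i k"
  shows "(\<Sum>i\<in>I. x i) \<le> (\<Sum>k\<in>K. \<Sum>i\<in>{i\<in>I. R i k}. x i)"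
proof -
  have "(\<Sum>i\<in>I. x i) \<le> (\<Sum>i\<in>I. \<Sum>k\<in>{k\<in>K. R i k}. x i)"
  proof (rule sum_mono)
    fix i assume "i \<in> I"
    then obtain k where "k \<in> K" "R i k" using assms(4) by blast
    then have "(\<Sum>k\<in>{k}. x i) \<le> (\<Sum>k\<in>{k\<in>K. R i k}. x i)"
      using \<open>i \<in> I\<close> assms(2,3) by (intro sum_mono2) auto
    then show "x i \<le> (\<Sum>k\<in>{k\<in>K. R i k}. x i)"
      by simp
  qed
  also have "\<dots> = (\<Sum>k\<in>K. \<Sum>i\<in>{i\<in>I. R i k}. x i)"
    using sum.swap_restrict[OF assms(1,2)] by simp
  finally show ?thesis .
qed

lemma sum_abs_mult_le_sum_L2_set_cover:
  fixes f h :: "'i \<Rightarrow> real"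
  assumes "finite I" "finite K" "\<And>i. i \<in> I \<Longrightarrow> \<exists>k\<in>K. R i k"
  shows "(\<Sum>i\<in>I. \<bar>f i\<bar> * \<bar>h i\<bar>)
           \<le> (\<Sum>k\<in>K. L2_set f {i\<in>I. R i k} * L2_set h {i\<in>I. R i k})"
proof -
  have "(\<Sum>i\<in>I. \<bar>f i\<bar> * \<bar>h i\<bar>) \<le> (\<Sum>k\<in>K. \<Sum>i\<in>{i\<in>I. R i k}. \<bar>f i\<bar> * \<bar>h i\<bar>)"
    using assms by (intro sum_le_sum_over_cover) auto
  also have "\<dots> \<le> (\<Sum>k\<in>K. L2_set f {i\<in>I. R i k} * L2_set h {i\<in>I. R i k})"
    by (intro sum_mono L2_set_mult_ineq)
  finally show ?thesis .
qed

lemma abs_incidence_transpose_mult: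
  "transpose (mat_abs (incidence src dst)) *v w = (\<chi> k. \<Sum>e | k = src e \<or> k = dst e. w $ e)"
  for w :: "real ^ 'e::finite"
proof -
  have "mat_abs (incidence src dst) $ e $ k = (if k = src e \<or> k = dst e then 1 else 0)" for e k
    by (auto simp: mat_abs_def incidence_def)
  moreover have "(\<Sum>e\<in>UNIV. (if k = src e \<or> k = dst e then 1 else 0) * w $ e)
      = (\<Sum>e | k = src e \<or> k = dst e. w $ e)" for k
    by (simp add: sum.If_cases if_distrib[of "\<lambda>c. c * _"])
  ultimately show ?thesis
    unfolding vec_eq_iff matrix_vector_mult_def transpose_def by simp
qed

lemma vec_sqrt_abs_incidence_transpose_sq:
  "vec_sqrt (transpose (mat_abs (incidence src dst)) *v vec_sq w) $ k
     = L2_set (($) w) {e. k = src e \<or> k = dst e}"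
  for w :: "real ^ 'e::finite"
  unfolding abs_incidence_transpose_mult by (simp add: vec_sqrt_def vec_sq_def L2_set_def)

theorem proposition2:
  fixes src dst :: "'e::finite \<Rightarrow> 'v::finite"
    and s t :: 'v
    and g u :: "real ^ 'v"
    and F :: "real ^ 'e"
  assumes transport: "s \<noteq> t"
    and no_loops: "\<And>e. src e \<noteq> dst e"
    and g_pos: "\<And>k. g $ k > 0"
    and capacity: "\<And>k. vec_sqrt (transpose (mat_abs (incidence src dst)) *v vec_sq F) $ k \<le> g $ k"
  shows "F \<bullet> (incidence src dst *v u)
           \<le> g \<bullet> vec_sqrt (transpose (mat_abs (incidence src dst)) *v vec_sq (incidence src dst *v u))"
proof -
  define d where "d = incidence src dst *v u"
  define N where "N k = {e. k = src e \<or> k = dst e}" for k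
  have capacity_N: "L2_set (($) F) (N k) \<le> g $ k" for k
    using capacity[of k] unfolding vec_sqrt_abs_incidence_transpose_sq N_def .
  have "F \<bullet> d \<le> (\<Sum>e\<in>UNIV. \<bar>F $ e\<bar> * \<bar>d $ e\<bar>)"
    unfolding inner_vec_def inner_real_def abs_mult[symmetric] by (intro sum_mono abs_ge_self)
  also have "\<dots> \<le> (\<Sum>k\<in>UNIV. L2_set (($) F) (N k) * L2_set (($) d) (N k))"
    using sum_abs_mult_le_sum_L2_set_cover[of UNIV UNIV "\<lambda>e k. k = src e \<or> k = dst e" "($) F" "($) d"]
    unfolding N_def by simp blast
  also have "\<dots> \<le> (\<Sum>k\<in>UNIV. g $ k * L2_set (($) d) (N k))"
    by (intro sum_mono mult_right_mono capacity_N L2_set_nonneg)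
  also have "\<dots> = g \<bullet> vec_sqrt (transpose (mat_abs (incidence src dst)) *v vec_sq d)"
    unfolding inner_vec_def inner_real_def vec_sqrt_abs_incidence_transpose_sq N_def ..
  finally show ?thesis unfolding d_def .
qed

end
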